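(* There is an absolute constant $C>0$ such that for every $n$ and every $n\times n$ random matrix $A$ with i.i.d. entries, $$\mathbb{E}\|A\|_{\infty\to2}\le C\sqrt n\,\mathbb{E}\|A\|_{2\to\infty}+C\,\mathbb{E}\|A\mathbf 1\|_2,$$ where $\mathbf 1=(1,\dots,1)\in\mathbb{R}^n$.
   Context: $\|B\|_{\infty\to2}=\max_{x\in\{-1,1\}^n}\|Bx\|_2$ (the $\ell_\infty\to\ell_2$ operator norm); $\|B\|_{2\to\infty}$ is the $\ell_2\to\ell_\infty$ operator norm, equal to the maximum Euclidean norm of a row of $B$. *)

theory Defs
  imports "HOL-Probability.Probability"
begin

text \<open>An n x n real matrix is a function on index pairs; only entries (i,j) with
  i,j < n are relevant. Vectors are functions on indices < n.\<close>

definition mat_vec :: "nat \<Rightarrow> (nat \<times> nat \<Rightarrow> real) \<Rightarrow> (nat \<Rightarrow> real) \<Rightarrow> nat \<Rightarrow> real" where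
  "mat_vec n A x = (\<lambda>i. \<Sum>j<n. A (i, j) * x j)"

definition euclid_norm :: "nat \<Rightarrow> (nat \<Rightarrow> real) \<Rightarrow> real" where
  "euclid_norm n v = sqrt (\<Sum>i<n. (v i)\<^sup>2)"

definition norm_inf_2 :: "nat \<Rightarrow> (nat \<times> nat \<Rightarrow> real) \<Rightarrow> real" where
  "norm_inf_2 n A = Max ((\<lambda>x. euclid_norm n (mat_vec n A x)) ` ({..<n} \<rightarrow>\<^sub>E {-1, 1}))"

text \<open>ell_2 to ell_infty operator norm: maximal Euclidean norm of a row
  (the 0 is harmless since norms are nonnegative; it only covers n = 0).\<close>
definition norm_2_inf :: "nat \<Rightarrow> (nat \<times> nat \<Rightarrow> real) \<Rightarrow> real" where
  "norm_2_inf n A = Max (insert 0 ((\<lambda>i. euclid_norm n (\<lambda>j. A (i, j))) ` {..<n}))"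

definition iid_matrix :: "nat \<Rightarrow> real measure \<Rightarrow> (nat \<times> nat \<Rightarrow> real) measure" where
  "iid_matrix n \<mu> = PiM ({..<n} \<times> {..<n}) (\<lambda>_. \<mu>)"

end

theory Submission
  imports Defs
begin

text \<open>Let \<open>m\<close> be the mean of the entries and \<open>A'\<close> an independent copy of \<open>A\<close>. Shifting by
  the constant matrix \<open>m\<close> costs \<open>n sqrt n |m| = |(E A) 1|\<^sub>2 \<le> E |A 1|\<^sub>2\<close> (Jensen), and
  Jensen in \<open>A'\<close> gives \<open>E \<parallel>A - m\<parallel> \<le> E \<parallel>A - A'\<parallel>\<close>. The matrix \<open>A - A'\<close> is symmetric, so its
  entries may be multiplied by independent random signs \<open>\<epsilon>\<close>. For a fixed matrix \<open>B\<close> and a fixed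
  sign vector \<open>x\<close>, \<open>|(\<epsilon> \<circ> B) x|\<^sup>2\<close> is a sum of \<open>n\<close> independent squared Rademacher sums with
  variances at most \<open>\<parallel>B\<parallel>\<^sub>2\<^sub>\<rightarrow>\<^sub>\<infinity>\<^sup>2\<close>; their exponential moments absorb the maximum over the \<open>2\<^sup>n\<close>
  vectors \<open>x\<close>, and the average of \<open>\<parallel>\<epsilon> \<circ> B\<parallel>\<^sub>\<infinity>\<^sub>\<rightarrow>\<^sub>2\<close> over \<open>\<epsilon>\<close> is at most \<open>4 sqrt n \<parallel>B\<parallel>\<^sub>2\<^sub>\<rightarrow>\<^sub>\<infinity>\<close>.
  Applied to \<open>B = A - A'\<close> this gives the theorem with \<open>C = 8\<close>; if the entries are not
  integrable, \<open>E \<parallel>A\<parallel>\<^sub>2\<^sub>\<rightarrow>\<^sub>\<infinity> = \<infinity>\<close>.\<close>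

abbreviation sign_vectors :: "nat \<Rightarrow> (nat \<Rightarrow> real) set" where
  "sign_vectors n \<equiv> {..<n} \<rightarrow>\<^sub>E {-1, 1}"

abbreviation sign_matrices :: "nat \<Rightarrow> (nat \<Rightarrow> nat \<Rightarrow> real) set" where
  "sign_matrices n \<equiv> {..<n} \<rightarrow>\<^sub>E sign_vectors n"

lemma finite_sign_vectors: "finite (sign_vectors n)"
  by (intro finite_PiE) auto

lemma sign_vectors_nonempty: "sign_vectors n \<noteq> {}"
  by (simp add: PiE_eq_empty_iff)

lemma card_sign_vectors: "card (sign_vectors n) = 2 ^ n"
  by (simp add: card_PiE numeral_2_eq_2)

lemma finite_sign_matrices: "finite (sign_matrices n)"
  using finite_sign_vectors by (intro finite_PiE) auto

lemma card_sign_matrices: "card (sign_matrices n) = (2 ^ n) ^ n"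
  by (simp add: card_PiE card_sign_vectors)

lemma sign_vector_square:
  assumes "x \<in> sign_vectors n" "j < n"
  shows "(x j)\<^sup>2 = 1"
proof -
  have "x j = -1 \<or> x j = 1" using assms by (auto simp: PiE_iff)
  then show ?thesis by auto
qed

lemma sum_PiE_insert:
  assumes "k \<notin> S"
  shows "(\<Sum>\<eta>\<in>PiE (insert k S) F. G \<eta>) = (\<Sum>e\<in>F k. \<Sum>\<eta>\<in>PiE S F. G (\<eta>(k := e)))"
proof -
  have "(\<Sum>\<eta>\<in>PiE (insert k S) F. G \<eta>) = (\<Sum>p\<in>F k \<times> PiE S F. G ((\<lambda>(y, g). g(k := y)) p))"
    unfolding PiE_insert_eq by (simp add: sum.reindex[OF inj_combinator[OF assms]])
  also have "\<dots> = (\<Sum>e\<in>F k. \<Sum>\<eta>\<in>PiE S F. G (\<eta>(k := e)))"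
    by (simp add: sum.cartesian_product split_def)
  finally show ?thesis .
qed

section \<open>Exponential moments of Rademacher sums\<close>

lemma cosh_le_exp_half_square: "cosh v \<le> exp (v\<^sup>2 / 2)" for v :: real
proof -
  have nonneg_case: "cosh v \<le> exp (v\<^sup>2 / 2)" if "v \<ge> 0" for v :: real
  proof -
    \<comment> \<open>Hoeffding's lemma for a fair sign: \<open>p = 1/2\<close>, \<open>h = 2v\<close>.\<close>
    have "- (2 * v) * (1/2) + ln (1 + (1/2) * (exp (2 * v) - 1)) \<le> (2 * v)\<^sup>2 / 8"
      using Hoeffdings_lemma_aux[of "2 * v" "1/2"] that by simp
    moreover have "1 + (1/2) * (exp (2 * v) - 1) = exp v * cosh v"
      by (simp add: cosh_def field_simps exp_minus mult_exp_exp[symmetric] exp_add[symmetric])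
    moreover have "ln (exp v * cosh v) = v + ln (cosh v)"
      by (subst ln_mult) (auto intro: cosh_real_pos)
    ultimately have "ln (cosh v) \<le> v\<^sup>2 / 2"
      by (simp add: power2_eq_square)
    then show ?thesis
      by (metis cosh_real_pos exp_le_cancel_iff exp_ln)
  qed
  show ?thesis
    using nonneg_case[of v] nonneg_case[of "- v"] by (cases "v \<ge> 0") simp_all
qed

lemma exp_sq_plus_exp_sq_le:
  fixes a u c :: real
  assumes "0 \<le> a"
  shows "exp (a * (u + c)\<^sup>2) + exp (a * (u - c)\<^sup>2) \<le> 2 * exp (a * (1 + 2 * a * c\<^sup>2) * u\<^sup>2 + a * c\<^sup>2)"
proof -
  have "exp (a * (u + c)\<^sup>2) + exp (a * (u - c)\<^sup>2) = 2 * exp (a * u\<^sup>2 + a * c\<^sup>2) * cosh (2 * a * c * u)"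
    by (simp add: cosh_def exp_add[symmetric] power2_eq_square algebra_simps)
  also have "\<dots> \<le> 2 * exp (a * u\<^sup>2 + a * c\<^sup>2) * exp ((2 * a * c * u)\<^sup>2 / 2)"
    by (intro mult_left_mono cosh_le_exp_half_square) auto
  also have "\<dots> = 2 * exp (a * (1 + 2 * a * c\<^sup>2) * u\<^sup>2 + a * c\<^sup>2)"
    by (simp add: exp_add[symmetric] power2_eq_square algebra_simps)
  finally show ?thesis .
qed

lemma sum_sign_vectors_Suc:
  "(\<Sum>\<eta>\<in>sign_vectors (Suc n). f (\<Sum>j<Suc n. \<eta> j * c j))
     = (\<Sum>\<eta>\<in>sign_vectors n. f ((\<Sum>j<n. \<eta> j * c j) + c n) + f ((\<Sum>j<n. \<eta> j * c j) - c n))"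
proof -
  have restrict: "(\<Sum>j<n. (\<eta>(n := e)) j * c j) = (\<Sum>j<n. \<eta> j * c j)" for \<eta> and e :: real
    by (intro sum.cong) auto
  have "(\<Sum>\<eta>\<in>sign_vectors (Suc n). f (\<Sum>j<Suc n. \<eta> j * c j))
      = (\<Sum>e\<in>{-1, 1}. \<Sum>\<eta>\<in>sign_vectors n. f (\<Sum>j<Suc n. (\<eta>(n := e)) j * c j))"
    unfolding lessThan_Suc by (rule sum_PiE_insert) simp
  also have "\<dots> = (\<Sum>e\<in>{-1, 1}. \<Sum>\<eta>\<in>sign_vectors n. f ((\<Sum>j<n. \<eta> j * c j) + e * c n))"
    by (simp only: sum.lessThan_Suc fun_upd_same restrict)
  finally show ?thesis
    by (simp add: sum.distrib add.commute)
qed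

lemma rademacher_exponent_step:
  fixes a d T s :: real
  assumes "0 \<le> a" "0 \<le> T" "4 * a * (T + d\<^sup>2) < 1"
  defines "a' \<equiv> a * (1 + 2 * a * d\<^sup>2)"
  shows "4 * a' * T < 1"
    and "a' * s\<^sup>2 / (1 - 4 * a' * T) + (2 * a' * T + a * d\<^sup>2)
           \<le> a * s\<^sup>2 / (1 - 4 * a * (T + d\<^sup>2)) + 2 * a * (T + d\<^sup>2)"
proof -
  have "0 \<le> a * d\<^sup>2"
    using assms(1) by simp
  then have aT: "4 * a * T \<le> 1"
    using assms(3) by (simp add: algebra_simps)
  have cross_term_le: "a * d\<^sup>2 * (4 * a * T) \<le> a * d\<^sup>2"
    using aT assms(1) mult_left_mono[of "4 * a * T" 1 "a * d\<^sup>2"] by simp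
  have a'_T_eq: "2 * a' * T = 2 * a * T + a * d\<^sup>2 * (4 * a * T)"
    unfolding a'_def by (simp add: algebra_simps power2_eq_square)
  have shift: "2 * a' * T + a * d\<^sup>2 \<le> 2 * a * (T + d\<^sup>2)"
    using cross_term_le unfolding a'_T_eq by (simp add: algebra_simps)
  show a'T: "4 * a' * T < 1"
    using shift assms(3) \<open>0 \<le> a * d\<^sup>2\<close> by (simp add: algebra_simps)
  have "a' * (1 - 4 * a * (T + d\<^sup>2)) - a * (1 - 4 * a' * T) = - a * (2 * a * d\<^sup>2 + 8 * a\<^sup>2 * d\<^sup>2 * d\<^sup>2)"
    unfolding a'_def by (simp add: algebra_simps power2_eq_square)
  also have "\<dots> \<le> 0"
    using assms(1) by simp
  finally have "a' / (1 - 4 * a' * T) \<le> a / (1 - 4 * a * (T + d\<^sup>2))"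
    using a'T assms(3) by (simp add: divide_simps mult.commute)
  then have "a' / (1 - 4 * a' * T) * s\<^sup>2 \<le> a / (1 - 4 * a * (T + d\<^sup>2)) * s\<^sup>2"
    by (rule mult_right_mono) simp
  then have "a' * s\<^sup>2 / (1 - 4 * a' * T) \<le> a * s\<^sup>2 / (1 - 4 * a * (T + d\<^sup>2))"
    by simp
  with shift show "a' * s\<^sup>2 / (1 - 4 * a' * T) + (2 * a' * T + a * d\<^sup>2)
           \<le> a * s\<^sup>2 / (1 - 4 * a * (T + d\<^sup>2)) + 2 * a * (T + d\<^sup>2)"
    by linarith
qed

text \<open>Up to the factor \<open>2^n\<close> the left-hand side is \<open>E exp (a (s + \<Sum> \<eta>\<^sub>j c\<^sub>j)\<^sup>2)\<close> for independent
  fair signs \<open>\<eta>\<^sub>j\<close>. Averaging out one sign at a time only inflates the coefficient \<open>a\<close>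
  of the square, which keeps the induction inside this family of bounds.\<close>

lemma sum_sign_vectors_exp_sq_le:
  fixes c :: "nat \<Rightarrow> real"
  assumes "0 \<le> a" "4 * a * (\<Sum>j<n. (c j)\<^sup>2) < 1"
  shows "(\<Sum>\<eta>\<in>sign_vectors n. exp (a * (s + (\<Sum>j<n. \<eta> j * c j))\<^sup>2))
           \<le> 2 ^ n * exp (a * s\<^sup>2 / (1 - 4 * a * (\<Sum>j<n. (c j)\<^sup>2)) + 2 * a * (\<Sum>j<n. (c j)\<^sup>2))"
  using assms
proof (induction n arbitrary: a s)
  case 0
  then show ?case by simp
next
  case (Suc n)
  define T where "T = (\<Sum>j<n. (c j)\<^sup>2)"
  define d where "d = c n"
  define a' where "a' = a * (1 + 2 * a * d\<^sup>2)"
  have T: "0 \<le> T" unfolding T_def by (simp add: sum_nonneg)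
  have sum_Suc: "(\<Sum>j<Suc n. (c j)\<^sup>2) = T + d\<^sup>2" unfolding T_def d_def by simp
  have a: "4 * a * (T + d\<^sup>2) < 1" using Suc.prems sum_Suc by simp
  have a': "0 \<le> a'" "4 * a' * T < 1"
    using Suc.prems(1) rademacher_exponent_step(1)[OF Suc.prems(1) T a] unfolding a'_def by simp_all
  have "(\<Sum>\<eta>\<in>sign_vectors (Suc n). exp (a * (s + (\<Sum>j<Suc n. \<eta> j * c j))\<^sup>2))
      = (\<Sum>\<eta>\<in>sign_vectors n. exp (a * ((s + (\<Sum>j<n. \<eta> j * c j)) + d)\<^sup>2)
                            + exp (a * ((s + (\<Sum>j<n. \<eta> j * c j)) - d)\<^sup>2))"
    unfolding d_def using sum_sign_vectors_Suc[where f="\<lambda>t. exp (a * (s + t)\<^sup>2)"]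
    by (simp only: add.assoc[symmetric] add_diff_eq)
  also have "\<dots> \<le> (\<Sum>\<eta>\<in>sign_vectors n. 2 * exp (a' * (s + (\<Sum>j<n. \<eta> j * c j))\<^sup>2 + a * d\<^sup>2))"
    unfolding a'_def by (intro sum_mono exp_sq_plus_exp_sq_le Suc.prems(1))
  also have "\<dots> = 2 * exp (a * d\<^sup>2) * (\<Sum>\<eta>\<in>sign_vectors n. exp (a' * (s + (\<Sum>j<n. \<eta> j * c j))\<^sup>2))"
    by (simp only: exp_add sum_distrib_left mult_ac)
  also have "\<dots> \<le> 2 * exp (a * d\<^sup>2) * (2 ^ n * exp (a' * s\<^sup>2 / (1 - 4 * a' * T) + 2 * a' * T))"
    using Suc.IH[OF a'(1), of s] a'(2) unfolding T_def by (intro mult_left_mono) auto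
  also have "\<dots> = 2 ^ Suc n * exp (a' * s\<^sup>2 / (1 - 4 * a' * T) + (2 * a' * T + a * d\<^sup>2))"
    by (simp only: exp_add power_Suc mult_ac add.assoc)
  also have "\<dots> \<le> 2 ^ Suc n * exp (a * s\<^sup>2 / (1 - 4 * a * (T + d\<^sup>2)) + 2 * a * (T + d\<^sup>2))"
    using rademacher_exponent_step(2)[OF Suc.prems(1) T a, of s] unfolding a'_def by simp
  finally show ?case unfolding sum_Suc .
qed

section \<open>Operator norms\<close>

lemma euclid_norm_eq_L2_set: "euclid_norm n v = L2_set v {..<n}"
  unfolding euclid_norm_def L2_set_def ..

lemma euclid_norm_nonneg: "0 \<le> euclid_norm n v"
  unfolding euclid_norm_def by (simp add: sum_nonneg)

lemma euclid_norm_cong: "(\<And>i. i < n \<Longrightarrow> v i = w i) \<Longrightarrow> euclid_norm n v = euclid_norm n w"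
  unfolding euclid_norm_def by (intro arg_cong[where f = sqrt] sum.cong) auto

lemma euclid_norm_add_le: "euclid_norm n (\<lambda>i. v i + w i) \<le> euclid_norm n v + euclid_norm n w"
  unfolding euclid_norm_eq_L2_set by (rule L2_set_triangle_ineq)

lemma inner_le_euclid_norm:
  assumes "euclid_norm n u \<le> 1"
  shows "(\<Sum>i<n. u i * w i) \<le> euclid_norm n w"
proof -
  have "(\<Sum>i<n. u i * w i) \<le> (\<Sum>i<n. \<bar>u i\<bar> * \<bar>w i\<bar>)"
    by (intro sum_mono) (simp add: abs_mult[symmetric])
  also have "\<dots> \<le> L2_set u {..<n} * L2_set w {..<n}"
    by (rule L2_set_mult_ineq)
  also have "\<dots> \<le> L2_set w {..<n}"
    using assms unfolding euclid_norm_eq_L2_set by (intro mult_left_le_one_le) auto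
  finally show ?thesis unfolding euclid_norm_eq_L2_set .
qed

lemma norm_inf_2_cong:
  assumes "\<And>i j. i < n \<Longrightarrow> j < n \<Longrightarrow> A (i, j) = B (i, j)"
  shows "norm_inf_2 n A = norm_inf_2 n B"
proof -
  have "mat_vec n A x i = mat_vec n B x i" if "i < n" for x i
    unfolding mat_vec_def using assms that by (intro sum.cong) auto
  then show ?thesis
    unfolding norm_inf_2_def by (intro arg_cong[where f = Max] image_cong refl euclid_norm_cong)
qed

lemma norm_2_inf_cong:
  assumes "\<And>i j. i < n \<Longrightarrow> j < n \<Longrightarrow> A (i, j) = B (i, j)"
  shows "norm_2_inf n A = norm_2_inf n B"
  unfolding norm_2_inf_def
  by (intro arg_cong[where f = Max] arg_cong[where f = "insert 0"] image_cong refl euclid_norm_cong assms)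
     auto

lemma euclid_norm_mat_vec_le_norm_inf_2:
  "x \<in> sign_vectors n \<Longrightarrow> euclid_norm n (mat_vec n A x) \<le> norm_inf_2 n A"
  unfolding norm_inf_2_def by (intro Max_ge) (auto simp: finite_sign_vectors)

lemma norm_inf_2_attained: "\<exists>x\<in>sign_vectors n. norm_inf_2 n A = euclid_norm n (mat_vec n A x)"
proof -
  have "norm_inf_2 n A \<in> (\<lambda>x. euclid_norm n (mat_vec n A x)) ` sign_vectors n"
    unfolding norm_inf_2_def by (intro Max_in) (auto simp: finite_sign_vectors sign_vectors_nonempty)
  then show ?thesis by auto
qed

lemma norm_inf_2_nonneg: "0 \<le> norm_inf_2 n A"
  using norm_inf_2_attained[of n A] euclid_norm_nonneg by metis

lemma norm_inf_2_0 [simp]: "norm_inf_2 0 A = 0"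
  unfolding norm_inf_2_def euclid_norm_def by (simp add: image_constant_conv)

lemma norm_inf_2_eq_sqrt_Max:
  "norm_inf_2 n A = sqrt (Max ((\<lambda>x. \<Sum>i<n. (mat_vec n A x i)\<^sup>2) ` sign_vectors n))"
proof -
  have "sqrt (Max ((\<lambda>x. \<Sum>i<n. (mat_vec n A x i)\<^sup>2) ` sign_vectors n))
      = Max (sqrt ` (\<lambda>x. \<Sum>i<n. (mat_vec n A x i)\<^sup>2) ` sign_vectors n)"
    by (intro mono_Max_commute monoI real_sqrt_le_mono)
       (auto simp: finite_sign_vectors sign_vectors_nonempty)
  then show ?thesis
    unfolding norm_inf_2_def euclid_norm_def by (simp add: image_image)
qed

lemma norm_inf_2_le_centered:
  fixes A :: "nat \<times> nat \<Rightarrow> real"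
  shows "norm_inf_2 n A \<le> norm_inf_2 n (\<lambda>k. A k - m) + real n * sqrt (real n) * \<bar>m\<bar>"
proof -
  obtain x where x: "x \<in> sign_vectors n" "norm_inf_2 n A = euclid_norm n (mat_vec n A x)"
    using norm_inf_2_attained by blast
  define w where "w = (\<lambda>i::nat. \<Sum>j<n. m * x j)"
  have split: "mat_vec n A x i = mat_vec n (\<lambda>k. A k - m) x i + w i" for i
    unfolding mat_vec_def w_def by (simp add: sum.distrib[symmetric] algebra_simps)
  have "\<bar>w i\<bar> \<le> real n * \<bar>m\<bar>" for i
  proof -
    have "\<bar>w i\<bar> \<le> (\<Sum>j<n. \<bar>m\<bar> * \<bar>x j\<bar>)"
      unfolding w_def abs_mult[symmetric] by (rule sum_abs)
    also have "\<dots> = (\<Sum>j<n. \<bar>m\<bar>)"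
      using sign_vector_square[OF x(1)] by (intro sum.cong) (auto simp: abs_square_eq_1)
    finally show ?thesis by simp
  qed
  then have "L2_set (\<lambda>i. \<bar>w i\<bar>) {..<n} \<le> L2_set (\<lambda>i. real n * \<bar>m\<bar>) {..<n}"
    by (intro L2_set_mono) auto
  then have "euclid_norm n w \<le> L2_set (\<lambda>i. real n * \<bar>m\<bar>) {..<n}"
    unfolding euclid_norm_eq_L2_set L2_set_def by simp
  also have "\<dots> = real n * sqrt (real n) * \<bar>m\<bar>"
    by (simp add: L2_set_constant)
  finally have "euclid_norm n w \<le> real n * sqrt (real n) * \<bar>m\<bar>" .
  moreover have "euclid_norm n (mat_vec n A x) \<le> euclid_norm n (mat_vec n (\<lambda>k. A k - m) x) + euclid_norm n w"
    unfolding split by (rule euclid_norm_add_le)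
  moreover note euclid_norm_mat_vec_le_norm_inf_2[OF x(1), of "\<lambda>k. A k - m"]
  ultimately show ?thesis
    using x(2) by linarith
qed

lemma norm_2_inf_nonneg: "0 \<le> norm_2_inf n A"
  unfolding norm_2_inf_def by (rule Max_ge) auto

lemma row_euclid_norm_le_norm_2_inf: "i < n \<Longrightarrow> euclid_norm n (\<lambda>j. A (i, j)) \<le> norm_2_inf n A"
  unfolding norm_2_inf_def by (intro Max_ge) auto

lemma row_sum_squares_le_norm_2_inf:
  assumes "i < n"
  shows "(\<Sum>j<n. (A (i, j))\<^sup>2) \<le> (norm_2_inf n A)\<^sup>2"
  using row_euclid_norm_le_norm_2_inf[OF assms, of A] unfolding euclid_norm_def
  by (metis real_le_lsqrt real_sqrt_ge_zero sqrt_le_D sum_nonneg zero_le_power2)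

lemma abs_entry_le_norm_2_inf:
  assumes "i < n" "j < n"
  shows "\<bar>A (i, j)\<bar> \<le> norm_2_inf n A"
proof -
  have "\<bar>A (i, j)\<bar> = sqrt ((A (i, j))\<^sup>2)" by simp
  also have "\<dots> \<le> sqrt (\<Sum>j<n. (A (i, j))\<^sup>2)"
    using assms(2) by (intro real_sqrt_le_mono member_le_sum[where f = "\<lambda>j. (A (i, j))\<^sup>2"]) auto
  also have "\<dots> \<le> norm_2_inf n A"
    using row_euclid_norm_le_norm_2_inf[OF assms(1)] unfolding euclid_norm_def .
  finally show ?thesis .
qed

lemma norm_2_inf_diff_le: "norm_2_inf n (\<lambda>k. A k - B k) \<le> norm_2_inf n A + norm_2_inf n B"
proof -
  have "euclid_norm n (\<lambda>j. A (i, j) - B (i, j)) \<le> norm_2_inf n A + norm_2_inf n B" if "i < n" for i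
  proof -
    have "euclid_norm n (\<lambda>j. A (i, j) - B (i, j))
        \<le> euclid_norm n (\<lambda>j. A (i, j)) + euclid_norm n (\<lambda>j. - B (i, j))"
      using euclid_norm_add_le[of n "\<lambda>j. A (i, j)" "\<lambda>j. - B (i, j)"] by simp
    also have "euclid_norm n (\<lambda>j. - B (i, j)) = euclid_norm n (\<lambda>j. B (i, j))"
      unfolding euclid_norm_def by simp
    finally show ?thesis
      using row_euclid_norm_le_norm_2_inf[OF that, of A] row_euclid_norm_le_norm_2_inf[OF that, of B]
      by linarith
  qed
  then show ?thesis
    unfolding norm_2_inf_def[of n "\<lambda>k. A k - B k"]
    using norm_2_inf_nonneg[of n A] norm_2_inf_nonneg[of n B] by (auto simp: Max_le_iff)
qed

section \<open>Random sign flips of a fixed matrix\<close>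

definition flip_signs :: "(nat \<Rightarrow> nat \<Rightarrow> real) \<Rightarrow> (nat \<times> nat \<Rightarrow> real) \<Rightarrow> nat \<times> nat \<Rightarrow> real" where
  "flip_signs \<epsilon> A = (\<lambda>(i, j). \<epsilon> i j * A (i, j))"

lemma mat_vec_flip_signs: "mat_vec n (flip_signs \<epsilon> A) x i = (\<Sum>j<n. \<epsilon> i j * (A (i, j) * x j))"
  by (simp add: mat_vec_def flip_signs_def mult.assoc)

lemma row_exp_moment_le:
  assumes "i < n" "x \<in> sign_vectors n" "0 \<le> a" "a * (norm_2_inf n A)\<^sup>2 \<le> 1/8"
  shows "(\<Sum>\<eta>\<in>sign_vectors n. exp (a * (\<Sum>j<n. \<eta> j * (A (i, j) * x j))\<^sup>2)) \<le> 2 ^ n * exp (1/4)"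
proof -
  define T where "T = (\<Sum>j<n. (A (i, j) * x j)\<^sup>2)"
  have "T = (\<Sum>j<n. (A (i, j))\<^sup>2)"
    unfolding T_def using sign_vector_square[OF assms(2)] by (intro sum.cong) (auto simp: power_mult_distrib)
  then have "a * T \<le> a * (norm_2_inf n A)\<^sup>2"
    using row_sum_squares_le_norm_2_inf[OF assms(1)] assms(3) by (intro mult_left_mono) auto
  then have "a * T \<le> 1/8"
    using assms(4) by linarith
  then have "(\<Sum>\<eta>\<in>sign_vectors n. exp (a * (0 + (\<Sum>j<n. \<eta> j * (A (i, j) * x j)))\<^sup>2))
      \<le> 2 ^ n * exp (a * 0\<^sup>2 / (1 - 4 * a * T) + 2 * a * T)"
    unfolding T_def by (intro sum_sign_vectors_exp_sq_le assms(3)) simp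
  also have "\<dots> \<le> 2 ^ n * exp (1/4)"
    using \<open>a * T \<le> 1/8\<close> by simp
  finally show ?thesis by simp
qed

text \<open>The signs of different rows are independent, so the sum over sign matrices factors
  into a product of row sums.\<close>

lemma sum_sign_matrices_exp_le:
  assumes "x \<in> sign_vectors n" "0 \<le> a" "a * (norm_2_inf n A)\<^sup>2 \<le> 1/8"
  shows "(\<Sum>\<epsilon>\<in>sign_matrices n. exp (a * (\<Sum>i<n. (mat_vec n (flip_signs \<epsilon> A) x i)\<^sup>2)))
           \<le> (2 ^ n * exp (1/4)) ^ n"
proof -
  define G where "G = (\<lambda>i \<eta>. exp (a * (\<Sum>j<n. \<eta> j * (A (i, j) * x j))\<^sup>2))"
  have "(\<Sum>\<epsilon>\<in>sign_matrices n. exp (a * (\<Sum>i<n. (mat_vec n (flip_signs \<epsilon> A) x i)\<^sup>2)))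
      = (\<Sum>\<epsilon>\<in>sign_matrices n. \<Prod>i<n. G i (\<epsilon> i))"
    unfolding G_def mat_vec_flip_signs by (simp add: sum_distrib_left exp_sum)
  also have "\<dots> = (\<Prod>i<n. \<Sum>\<eta>\<in>sign_vectors n. G i \<eta>)"
    by (rule prod_sum_PiE[symmetric]) (auto simp: finite_sign_vectors)
  also have "\<dots> \<le> (\<Prod>i<n. 2 ^ n * exp (1/4))"
    unfolding G_def using row_exp_moment_le[OF _ assms]
    by (intro prod_mono conjI sum_nonneg) auto
  finally show ?thesis by simp
qed

lemma sum_sign_matrices_exp_Max_le:
  assumes "0 \<le> a" "a * (norm_2_inf n A)\<^sup>2 \<le> 1/8"
  shows "(\<Sum>\<epsilon>\<in>sign_matrices n. exp (a * Max ((\<lambda>x. \<Sum>i<n. (mat_vec n (flip_signs \<epsilon> A) x i)\<^sup>2) ` sign_vectors n)))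
           \<le> real (card (sign_matrices n)) * exp (2 * real n)"
proof -
  define Q where "Q = (\<lambda>\<epsilon> x. \<Sum>i<n. (mat_vec n (flip_signs \<epsilon> A) x i)\<^sup>2)"
  have "exp (a * Max (Q \<epsilon> ` sign_vectors n)) \<le> (\<Sum>x\<in>sign_vectors n. exp (a * Q \<epsilon> x))" for \<epsilon>
  proof -
    obtain x where "x \<in> sign_vectors n" "Max (Q \<epsilon> ` sign_vectors n) = Q \<epsilon> x"
      using Max_in[of "Q \<epsilon> ` sign_vectors n"] finite_sign_vectors sign_vectors_nonempty by fastforce
    then show ?thesis
      using member_le_sum[of x "sign_vectors n" "\<lambda>x. exp (a * Q \<epsilon> x)"] finite_sign_vectors by simp
  qed
  then have "(\<Sum>\<epsilon>\<in>sign_matrices n. exp (a * Max (Q \<epsilon> ` sign_vectors n)))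
      \<le> (\<Sum>x\<in>sign_vectors n. \<Sum>\<epsilon>\<in>sign_matrices n. exp (a * Q \<epsilon> x))"
    by (subst sum.swap) (rule sum_mono)
  also have "\<dots> \<le> (\<Sum>x\<in>sign_vectors n. (2 ^ n * exp (1/4)) ^ n)"
    unfolding Q_def by (intro sum_mono sum_sign_matrices_exp_le assms)
  also have "\<dots> = real (card (sign_matrices n)) * (2 * exp (1/4)) ^ n"
    by (simp add: card_sign_vectors card_sign_matrices power_mult_distrib mult_ac)
  also have "\<dots> \<le> real (card (sign_matrices n)) * exp 2 ^ n"
  proof -
    have "2 * exp (1/4) \<le> exp (7/4) * exp (1/4::real)"
      using exp_ge_add_one_self[of "7/4::real"] by (intro mult_right_mono) auto
    also have "\<dots> = exp 2"
      by (simp add: exp_add[symmetric])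
    finally show ?thesis
      by (intro mult_left_mono power_mono) auto
  qed
  finally show ?thesis
    unfolding Q_def by (simp add: exp_of_nat_mult[symmetric] mult.commute)
qed

lemma sum_le_of_sum_exp_le:
  fixes f :: "'a \<Rightarrow> real"
  assumes "finite S" "(\<Sum>s\<in>S. exp (f s)) \<le> real (card S) * exp c"
  shows "(\<Sum>s\<in>S. f s) \<le> real (card S) * c"
proof -
  have "f s \<le> c - 1 + exp (f s) / exp c" for s
    using exp_ge_add_one_self[of "f s - c"] by (simp add: exp_diff)
  then have "(\<Sum>s\<in>S. f s) \<le> (\<Sum>s\<in>S. c - 1 + exp (f s) / exp c)"
    by (rule sum_mono)
  also have "\<dots> = real (card S) * (c - 1) + (\<Sum>s\<in>S. exp (f s)) / exp c"
    by (simp add: sum.distrib sum_divide_distrib)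
  also have "\<dots> \<le> real (card S) * (c - 1) + real (card S) * exp c / exp c"
    using assms(2) by (intro add_left_mono divide_right_mono) auto
  finally show ?thesis
    by (simp add: algebra_simps)
qed

lemma sum_sqrt_le:
  fixes f :: "'a \<Rightarrow> real"
  assumes "\<And>s. s \<in> S \<Longrightarrow> 0 \<le> f s" "0 < t" "(\<Sum>s\<in>S. f s) \<le> real (card S) * t\<^sup>2"
  shows "(\<Sum>s\<in>S. sqrt (f s)) \<le> real (card S) * t"
proof -
  have "sqrt (f s) \<le> (f s / t + t) / 2" if "s \<in> S" for s
  proof -
    \<comment> \<open>AM-GM: \<open>2 t sqrt(f s) \<le> f s + t\<^sup>2\<close>.\<close>
    have "0 \<le> (sqrt (f s) - t)\<^sup>2" by simp
    then have "2 * t * sqrt (f s) \<le> f s + t\<^sup>2"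
      using assms(1)[OF that] by (simp add: power2_eq_square algebra_simps)
    then show ?thesis
      using assms(2) by (simp add: field_simps power2_eq_square)
  qed
  then have "(\<Sum>s\<in>S. sqrt (f s)) \<le> (\<Sum>s\<in>S. (f s / t + t) / 2)"
    by (rule sum_mono)
  also have "\<dots> = ((\<Sum>s\<in>S. f s) / t + real (card S) * t) / 2"
    by (simp add: sum.distrib sum_divide_distrib[symmetric] add_divide_distrib)
  also have "\<dots> \<le> (real (card S) * t\<^sup>2 / t + real (card S) * t) / 2"
    using assms(2,3) by (intro divide_right_mono add_right_mono) auto
  also have "\<dots> = real (card S) * t"
    using assms(2) by (simp add: power2_eq_square)
  finally show ?thesis .
qed

lemma sum_norm_inf_2_flip_signs_le:
  "(\<Sum>\<epsilon>\<in>sign_matrices n. norm_inf_2 n (flip_signs \<epsilon> A))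
     \<le> real (card (sign_matrices n)) * (4 * sqrt (real n) * norm_2_inf n A)"
proof (cases "norm_2_inf n A = 0")
  case True
  then have "A (i, j) = 0" if "i < n" "j < n" for i j
    using abs_entry_le_norm_2_inf[OF that, of A] by simp
  then have "norm_inf_2 n (flip_signs \<epsilon> A) = norm_inf_2 n (\<lambda>_. 0)" for \<epsilon>
    by (intro norm_inf_2_cong) (simp add: flip_signs_def)
  moreover have "norm_inf_2 n (\<lambda>_. 0) = 0"
    unfolding norm_inf_2_eq_sqrt_Max mat_vec_def using sign_vectors_nonempty[of n]
    by (simp add: image_constant_conv)
  ultimately show ?thesis
    using True by simp
next
  case False
  define R where "R = norm_2_inf n A"
  have R: "0 < R"
    using False norm_2_inf_nonneg[of n A] unfolding R_def by simp
  have n: "0 < n"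
    using R unfolding R_def norm_2_inf_def by (cases n) auto
  define N where "N = real (card (sign_matrices n))"
  define M where "M = (\<lambda>\<epsilon>. Max ((\<lambda>x. \<Sum>i<n. (mat_vec n (flip_signs \<epsilon> A) x i)\<^sup>2) ` sign_vectors n))"
  have M: "0 \<le> M \<epsilon>" for \<epsilon>
  proof -
    obtain x where "x \<in> sign_vectors n" using sign_vectors_nonempty by blast
    then have "(\<Sum>i<n. (mat_vec n (flip_signs \<epsilon> A) x i)\<^sup>2) \<le> M \<epsilon>"
      unfolding M_def by (intro Max_ge) (auto simp: finite_sign_vectors)
    then show ?thesis
      using sum_nonneg[of "{..<n}" "\<lambda>i. (mat_vec n (flip_signs \<epsilon> A) x i)\<^sup>2"] by simp
  qed
  \<comment> \<open>The exponential moment at \<open>a = 1 / (8 R\<^sup>2)\<close> bounds the average of \<open>M\<close> by \<open>16 n R\<^sup>2\<close>.\<close>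
  have "1 / (8 * R\<^sup>2) * (norm_2_inf n A)\<^sup>2 \<le> 1/8"
    using R unfolding R_def by simp
  from sum_sign_matrices_exp_Max_le[OF _ this]
  have "(\<Sum>\<epsilon>\<in>sign_matrices n. exp (1 / (8 * R\<^sup>2) * M \<epsilon>)) \<le> N * exp (2 * real n)"
    unfolding M_def N_def by simp
  from sum_le_of_sum_exp_le[OF finite_sign_matrices this[unfolded N_def]]
  have "(\<Sum>\<epsilon>\<in>sign_matrices n. 1 / (8 * R\<^sup>2) * M \<epsilon>) \<le> N * (2 * real n)"
    unfolding N_def .
  then have "1 / (8 * R\<^sup>2) * (\<Sum>\<epsilon>\<in>sign_matrices n. M \<epsilon>) \<le> N * (2 * real n)"
    by (simp add: sum_distrib_left)
  then have "(\<Sum>\<epsilon>\<in>sign_matrices n. M \<epsilon>) \<le> N * (16 * real n * R\<^sup>2)"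
    using R by (simp add: field_simps)
  also have "\<dots> = N * (4 * sqrt (real n) * R)\<^sup>2"
    by (simp add: power_mult_distrib)
  finally have "(\<Sum>\<epsilon>\<in>sign_matrices n. M \<epsilon>) \<le> N * (4 * sqrt (real n) * R)\<^sup>2" .
  then have "(\<Sum>\<epsilon>\<in>sign_matrices n. sqrt (M \<epsilon>)) \<le> N * (4 * sqrt (real n) * R)"
    unfolding N_def using n R by (intro sum_sqrt_le M) auto
  then show ?thesis
    unfolding norm_inf_2_eq_sqrt_Max M_def N_def R_def .
qed

lemma sum_norm_inf_2_flip_signs_diff_le:
  "(\<Sum>\<epsilon>\<in>sign_matrices n. norm_inf_2 n (flip_signs \<epsilon> (\<lambda>k. A k - B k)))
     \<le> real (card (sign_matrices n)) * (4 * sqrt (real n) * (norm_2_inf n A + norm_2_inf n B))"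
proof -
  have "(\<Sum>\<epsilon>\<in>sign_matrices n. norm_inf_2 n (flip_signs \<epsilon> (\<lambda>k. A k - B k)))
      \<le> real (card (sign_matrices n)) * (4 * sqrt (real n) * norm_2_inf n (\<lambda>k. A k - B k))"
    by (rule sum_norm_inf_2_flip_signs_le)
  also have "\<dots> \<le> real (card (sign_matrices n)) * (4 * sqrt (real n) * (norm_2_inf n A + norm_2_inf n B))"
    by (intro mult_left_mono norm_2_inf_diff_le) auto
  finally show ?thesis .
qed

section \<open>Jensen's inequality for matrix norms\<close>

lemma ennreal_integral_le_nn_integral:
  fixes f :: "'a \<Rightarrow> real"
  assumes "integrable M f"
  shows "ennreal (integral\<^sup>L M f) \<le> (\<integral>\<^sup>+x. ennreal (f x) \<partial>M)"
proof -
  have "integral\<^sup>L M f \<le> integral\<^sup>L M (\<lambda>x. max 0 (f x))"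
    using assms by (intro integral_mono) auto
  then have "ennreal (integral\<^sup>L M f) \<le> ennreal (integral\<^sup>L M (\<lambda>x. max 0 (f x)))"
    by (rule ennreal_leI)
  also have "\<dots> = (\<integral>\<^sup>+x. ennreal (max 0 (f x)) \<partial>M)"
    using assms by (intro nn_integral_eq_integral[symmetric]) auto
  finally show ?thesis
    by (simp add: ennreal_max_0)
qed

lemma integral_linear_form_mat_vec_diff:
  fixes B :: "'a \<Rightarrow> nat \<times> nat \<Rightarrow> real"
  assumes "prob_space M"
    and integrable: "\<And>i j. i < n \<Longrightarrow> j < n \<Longrightarrow> integrable M (\<lambda>y. B y (i, j))"
    and mean: "\<And>i j. i < n \<Longrightarrow> j < n \<Longrightarrow> integral\<^sup>L M (\<lambda>y. B y (i, j)) = m"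
  shows "integrable M (\<lambda>y. \<Sum>i<n. u i * mat_vec n (\<lambda>k. A k - B y k) x i)"
    and "integral\<^sup>L M (\<lambda>y. \<Sum>i<n. u i * mat_vec n (\<lambda>k. A k - B y k) x i)
           = (\<Sum>i<n. u i * mat_vec n (\<lambda>k. A k - m) x i)"
proof -
  interpret prob_space M by fact
  define c where "c = (\<Sum>i<n. \<Sum>j<n. u i * (A (i, j) * x j))"
  define L where "L = (\<lambda>y. \<Sum>i<n. \<Sum>j<n. (u i * x j) * B y (i, j))"
  have eq: "(\<lambda>y. \<Sum>i<n. u i * mat_vec n (\<lambda>k. A k - B y k) x i) = (\<lambda>y. c - L y)"
    unfolding mat_vec_def c_def L_def by (simp add: sum_distrib_left sum_subtractf[symmetric] algebra_simps)
  have L: "integrable M L"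
    unfolding L_def using integrable
    by (auto intro!: Bochner_Integration.integrable_sum Bochner_Integration.integrable_mult_right)
  then show "integrable M (\<lambda>y. \<Sum>i<n. u i * mat_vec n (\<lambda>k. A k - B y k) x i)"
    unfolding eq by (intro Bochner_Integration.integrable_diff) auto
  have row: "integral\<^sup>L M (\<lambda>y. \<Sum>j<n. (u i * x j) * B y (i, j)) = (\<Sum>j<n. (u i * x j) * m)"
    if "i < n" for i
    using that integrable mean by (subst Bochner_Integration.integral_sum) auto
  have "integral\<^sup>L M L = (\<Sum>i<n. \<Sum>j<n. (u i * x j) * m)"
    unfolding L_def using integrable row
    by (subst Bochner_Integration.integral_sum) (auto intro!: Bochner_Integration.integrable_sum)
  then have "integral\<^sup>L M (\<lambda>y. c - L y) = c - (\<Sum>i<n. \<Sum>j<n. (u i * x j) * m)"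
    using L by (simp add: prob_space)
  also have "\<dots> = (\<Sum>i<n. u i * mat_vec n (\<lambda>k. A k - m) x i)"
    unfolding c_def mat_vec_def by (simp add: sum_distrib_left sum_subtractf[symmetric] algebra_simps)
  finally show "integral\<^sup>L M (\<lambda>y. \<Sum>i<n. u i * mat_vec n (\<lambda>k. A k - B y k) x i)
           = (\<Sum>i<n. u i * mat_vec n (\<lambda>k. A k - m) x i)"
    unfolding eq .
qed

text \<open>Jensen's inequality for the convex map \<open>B \<mapsto> |(A - B) x|\<close>, realised by testing against the
  unit vector in the direction of \<open>(A - E B) x\<close>.\<close>

lemma euclid_norm_mat_vec_mean_le:
  fixes B :: "'a \<Rightarrow> nat \<times> nat \<Rightarrow> real"
  assumes "prob_space M"
    and "\<And>i j. i < n \<Longrightarrow> j < n \<Longrightarrow> integrable M (\<lambda>y. B y (i, j))"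
    and "\<And>i j. i < n \<Longrightarrow> j < n \<Longrightarrow> integral\<^sup>L M (\<lambda>y. B y (i, j)) = m"
  shows "ennreal (euclid_norm n (mat_vec n (\<lambda>k. A k - m) x))
           \<le> (\<integral>\<^sup>+y. ennreal (euclid_norm n (mat_vec n (\<lambda>k. A k - B y k) x)) \<partial>M)"
proof -
  define v where "v = mat_vec n (\<lambda>k. A k - m) x"
  define r where "r = euclid_norm n v"
  show ?thesis
  proof (cases "r = 0")
    case True
    then show ?thesis unfolding r_def v_def by simp
  next
    case False
    then have r: "0 < r" using euclid_norm_nonneg[of n v] unfolding r_def by simp
    have r_sq: "r\<^sup>2 = (\<Sum>i<n. (v i)\<^sup>2)"
      unfolding r_def euclid_norm_def by (simp add: sum_nonneg)
    define u where "u = (\<lambda>i. v i / r)"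
    have "(\<Sum>i<n. (u i)\<^sup>2) = 1"
      unfolding u_def using r by (simp add: power_divide sum_divide_distrib[symmetric] r_sq[symmetric])
    then have u: "euclid_norm n u \<le> 1"
      unfolding euclid_norm_def by simp
    have "(\<Sum>i<n. u i * v i) = r\<^sup>2 / r"
      unfolding u_def r_sq by (simp add: sum_divide_distrib power2_eq_square)
    also have "\<dots> = r"
      using r by (simp add: power2_eq_square)
    finally have "(\<Sum>i<n. u i * v i) = r" .
    then have "ennreal r = ennreal (integral\<^sup>L M (\<lambda>y. \<Sum>i<n. u i * mat_vec n (\<lambda>k. A k - B y k) x i))"
      using integral_linear_form_mat_vec_diff(2)[where B = B and m = m and u = u and A = A and x = x, OF assms]
      unfolding v_def by simp
    also have "\<dots> \<le> (\<integral>\<^sup>+y. ennreal (\<Sum>i<n. u i * mat_vec n (\<lambda>k. A k - B y k) x i) \<partial>M)"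
      by (intro ennreal_integral_le_nn_integral integral_linear_form_mat_vec_diff(1)[where B = B and m = m, OF assms])
    also have "\<dots> \<le> (\<integral>\<^sup>+y. ennreal (euclid_norm n (mat_vec n (\<lambda>k. A k - B y k) x)) \<partial>M)"
      by (intro nn_integral_mono ennreal_leI inner_le_euclid_norm u)
    finally show ?thesis
      unfolding r_def v_def .
  qed
qed

lemma norm_inf_2_mean_le:
  fixes B :: "'a \<Rightarrow> nat \<times> nat \<Rightarrow> real"
  assumes "prob_space M"
    and "\<And>i j. i < n \<Longrightarrow> j < n \<Longrightarrow> integrable M (\<lambda>y. B y (i, j))"
    and "\<And>i j. i < n \<Longrightarrow> j < n \<Longrightarrow> integral\<^sup>L M (\<lambda>y. B y (i, j)) = m"
  shows "ennreal (norm_inf_2 n (\<lambda>k. A k - m)) \<le> (\<integral>\<^sup>+y. ennreal (norm_inf_2 n (\<lambda>k. A k - B y k)) \<partial>M)"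
proof -
  obtain x where x: "x \<in> sign_vectors n"
    "norm_inf_2 n (\<lambda>k. A k - m) = euclid_norm n (mat_vec n (\<lambda>k. A k - m) x)"
    using norm_inf_2_attained by blast
  then have "ennreal (norm_inf_2 n (\<lambda>k. A k - m))
      \<le> (\<integral>\<^sup>+y. ennreal (euclid_norm n (mat_vec n (\<lambda>k. A k - B y k) x)) \<partial>M)"
    using euclid_norm_mat_vec_mean_le[where B = B and m = m, OF assms] by simp
  also have "\<dots> \<le> (\<integral>\<^sup>+y. ennreal (norm_inf_2 n (\<lambda>k. A k - B y k)) \<partial>M)"
    by (intro nn_integral_mono ennreal_leI euclid_norm_mat_vec_le_norm_inf_2 x(1))
  finally show ?thesis .
qed

lemma borel_measurable_norm_inf_2:
  assumes "\<And>i j. i < n \<Longrightarrow> j < n \<Longrightarrow> (\<lambda>\<omega>. A \<omega> (i, j)) \<in> borel_measurable M"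
  shows "(\<lambda>\<omega>. norm_inf_2 n (A \<omega>)) \<in> borel_measurable M"
  unfolding norm_inf_2_def euclid_norm_def mat_vec_def using assms
  by (intro borel_measurable_Max finite_sign_vectors borel_measurable_sqrt borel_measurable_sum
      borel_measurable_power borel_measurable_times borel_measurable_const) auto

lemma borel_measurable_norm_2_inf:
  assumes "\<And>i j. i < n \<Longrightarrow> j < n \<Longrightarrow> (\<lambda>\<omega>. A \<omega> (i, j)) \<in> borel_measurable M"
  shows "(\<lambda>\<omega>. norm_2_inf n (A \<omega>)) \<in> borel_measurable M"
proof -
  have "norm_2_inf n (A \<omega>) = Max (insert 0 ((\<lambda>i. euclid_norm n (\<lambda>j. A \<omega> (i, j))) ` {..<n}))" for \<omega>
    unfolding norm_2_inf_def ..
  have "norm_2_inf n (A \<omega>) = max 0 (Max ((\<lambda>i. euclid_norm n (\<lambda>j. A \<omega> (i, j))) ` {..<n}))"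
    if "n \<noteq> 0" for \<omega>
    unfolding norm_2_inf_def using that by (subst Max_insert) auto
  then show ?thesis
    unfolding euclid_norm_def using assms
    by (cases "n = 0")
       (simp_all add: norm_2_inf_def borel_measurable_max borel_measurable_Max borel_measurable_sqrt
         borel_measurable_sum borel_measurable_power)
qed

section \<open>Symmetrization\<close>

lemma borel_measurable_PiM_component:
  assumes "sets \<mu> = sets borel" "k \<in> I"
  shows "(\<lambda>\<omega>. \<omega> k) \<in> borel_measurable (PiM I (\<lambda>_. \<mu>))"
  using measurable_component_singleton[OF assms(2), of "\<lambda>_. \<mu>"] measurable_cong_sets[OF refl assms(1)]
  by metis

lemma nn_integral_PiM_component:
  assumes "prob_space \<mu>" "k \<in> I" "f \<in> borel_measurable \<mu>"
  shows "(\<integral>\<^sup>+\<omega>. f (\<omega> k) \<partial>PiM I (\<lambda>_. \<mu>)) = (\<integral>\<^sup>+x. f x \<partial>\<mu>)"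
proof -
  have "distr (PiM I (\<lambda>_. \<mu>)) \<mu> (\<lambda>\<omega>. \<omega> k) = \<mu>"
    using distr_PiM_component[of I "\<lambda>_. \<mu>" k] assms by simp
  moreover have "(\<lambda>\<omega>. \<omega> k) \<in> measurable (PiM I (\<lambda>_. \<mu>)) \<mu>"
    using measurable_component_singleton[OF assms(2), of "\<lambda>_. \<mu>"] by simp
  ultimately show ?thesis
    using nn_integral_distr[of "\<lambda>\<omega>. \<omega> k" "PiM I (\<lambda>_. \<mu>)" \<mu> f] assms(3) by simp
qed

lemma
  fixes f :: "'a \<Rightarrow> real"
  assumes "prob_space \<mu>" "k \<in> I" "integrable \<mu> f"
  shows integrable_PiM_component: "integrable (PiM I (\<lambda>_. \<mu>)) (\<lambda>\<omega>. f (\<omega> k))"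
    and integral_PiM_component: "integral\<^sup>L (PiM I (\<lambda>_. \<mu>)) (\<lambda>\<omega>. f (\<omega> k)) = integral\<^sup>L \<mu> f"
proof -
  have distr: "distr (PiM I (\<lambda>_. \<mu>)) \<mu> (\<lambda>\<omega>. \<omega> k) = \<mu>"
    using distr_PiM_component[of I "\<lambda>_. \<mu>" k] assms by simp
  have "(\<lambda>\<omega>. \<omega> k) \<in> measurable (PiM I (\<lambda>_. \<mu>)) \<mu>"
    using measurable_component_singleton[OF assms(2), of "\<lambda>_. \<mu>"] by simp
  moreover have "f \<in> borel_measurable \<mu>"
    using assms(3) by simp
  ultimately show "integrable (PiM I (\<lambda>_. \<mu>)) (\<lambda>\<omega>. f (\<omega> k))"
    and "integral\<^sup>L (PiM I (\<lambda>_. \<mu>)) (\<lambda>\<omega>. f (\<omega> k)) = integral\<^sup>L \<mu> f"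
    using integrable_distr_eq[of "\<lambda>\<omega>. \<omega> k" "PiM I (\<lambda>_. \<mu>)" \<mu> f]
      integral_distr[of "\<lambda>\<omega>. \<omega> k" "PiM I (\<lambda>_. \<mu>)" \<mu> f] distr assms(3)
    by simp_all
qed

lemma nn_integral_PiM_reindex:
  assumes "prob_space \<mu>" "inj_on f I" "f \<in> I \<rightarrow> K" "g \<in> borel_measurable (PiM I (\<lambda>_. \<mu>))"
  shows "(\<integral>\<^sup>+\<omega>. g (\<lambda>k\<in>I. \<omega> (f k)) \<partial>PiM K (\<lambda>_. \<mu>)) = (\<integral>\<^sup>+x. g x \<partial>PiM I (\<lambda>_. \<mu>))"
proof -
  have distr: "distr (PiM K (\<lambda>_. \<mu>)) (PiM I (\<lambda>_. \<mu>)) (\<lambda>\<omega>. \<lambda>k\<in>I. \<omega> (f k)) = PiM I (\<lambda>_. \<mu>)"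
    using distr_PiM_reindex[of K "\<lambda>_. \<mu>" f I] assms by simp
  have "(\<lambda>\<omega>. \<lambda>k\<in>I. \<omega> (f k)) \<in> measurable (PiM K (\<lambda>_. \<mu>)) (PiM I (\<lambda>_. \<mu>))"
    using assms(3) by (intro measurable_restrict measurable_component_singleton) auto
  from nn_integral_distr[OF this, of g] show ?thesis
    unfolding distr using assms(4) by simp
qed

abbreviation iid_stacked_pair :: "nat \<Rightarrow> real measure \<Rightarrow> (nat \<times> nat \<Rightarrow> real) measure" where
  "iid_stacked_pair n \<mu> \<equiv> PiM ({..<2 * n} \<times> {..<n}) (\<lambda>_. \<mu>)"

definition shift_rows :: "nat \<Rightarrow> nat \<times> nat \<Rightarrow> nat \<times> nat" where
  "shift_rows n k = (fst k + n, snd k)"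

definition copy_difference :: "nat \<Rightarrow> (nat \<times> nat \<Rightarrow> real) \<Rightarrow> nat \<times> nat \<Rightarrow> real" where
  "copy_difference n \<omega> k = \<omega> k - \<omega> (shift_rows n k)"

definition swap_copies :: "nat \<Rightarrow> (nat \<Rightarrow> nat \<Rightarrow> real) \<Rightarrow> nat \<times> nat \<Rightarrow> nat \<times> nat" where
  "swap_copies n \<epsilon> = (\<lambda>(i, j).
     if i < n \<and> \<epsilon> i j = -1 then (i + n, j)
     else if n \<le> i \<and> i < 2 * n \<and> \<epsilon> (i - n) j = -1 then (i - n, j)
     else (i, j))"

lemma shift_rows_image: "shift_rows n ` ({..<n} \<times> {..<n}) = {n..<2 * n} \<times> {..<n}"
proof (intro set_eqI iffI)
  fix k assume "k \<in> {n..<2 * n} \<times> {..<n}"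
  then have "k = shift_rows n (fst k - n, snd k)" "(fst k - n, snd k) \<in> {..<n} \<times> {..<n}"
    by (auto simp: shift_rows_def)
  then show "k \<in> shift_rows n ` ({..<n} \<times> {..<n})" by blast
qed (auto simp: shift_rows_def)

lemma inj_on_shift_rows: "inj_on (shift_rows n) S"
  unfolding shift_rows_def inj_on_def by auto

lemma swap_copies_in: "swap_copies n \<epsilon> \<in> {..<2 * n} \<times> {..<n} \<rightarrow> {..<2 * n} \<times> {..<n}"
  unfolding swap_copies_def by auto

lemma swap_copies_swap_copies: "swap_copies n \<epsilon> (swap_copies n \<epsilon> k) = k"
  by (cases k) (auto simp: swap_copies_def)

lemma inj_on_swap_copies: "inj_on (swap_copies n \<epsilon>) A"
  by (metis inj_onI swap_copies_swap_copies)

lemma borel_measurable_copy_difference: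
  assumes "sets \<mu> = sets borel" "i < n" "j < n"
  shows "(\<lambda>\<omega>. copy_difference n \<omega> (i, j)) \<in> borel_measurable (iid_stacked_pair n \<mu>)"
  unfolding copy_difference_def using assms
  by (intro borel_measurable_diff borel_measurable_PiM_component) (auto simp: shift_rows_def)

lemma borel_measurable_norm_inf_2_copy_difference:
  assumes "sets \<mu> = sets borel"
  shows "(\<lambda>\<omega>. ennreal (norm_inf_2 n (copy_difference n \<omega>)))
           \<in> borel_measurable (iid_stacked_pair n \<mu>)"
  using assms
  by (intro measurable_compose[OF _ measurable_ennreal] borel_measurable_norm_inf_2
      borel_measurable_copy_difference)

text \<open>With \<open>A'\<close> an independent copy of \<open>A\<close> (the rows \<open>n..<2n\<close> of \<open>\<omega>\<close>),
  Jensen's inequality in \<open>A'\<close> gives \<open>E \<parallel>A - E A\<parallel> \<le> E \<parallel>A - A'\<parallel>\<close>.\<close>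

lemma nn_integral_norm_inf_2_centered_le:
  fixes \<mu> :: "real measure"
  assumes \<mu>: "prob_space \<mu>" "sets \<mu> = sets borel" and int: "integrable \<mu> (\<lambda>x. x)"
  shows "(\<integral>\<^sup>+A. ennreal (norm_inf_2 n (\<lambda>k. A k - integral\<^sup>L \<mu> (\<lambda>x. x))) \<partial>PiM ({..<n} \<times> {..<n}) (\<lambda>_. \<mu>))
      \<le> (\<integral>\<^sup>+\<omega>. ennreal (norm_inf_2 n (copy_difference n \<omega>)) \<partial>iid_stacked_pair n \<mu>)"
proof -
  interpret product_prob_space "\<lambda>_::nat \<times> nat. \<mu>"
    by (rule product_prob_spaceI) (rule \<mu>(1))
  define I where "I = {..<n} \<times> {..<(n::nat)}"
  define J where "J = shift_rows n ` I"
  have IJ: "I \<union> J = {..<2 * n} \<times> {..<n}" "I \<inter> J = {}"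
    unfolding I_def J_def shift_rows_image by auto
  have shift: "shift_rows n (i, j) \<in> J" if "i < n" "j < n" for i j
    unfolding J_def I_def using that by auto
  define F where "F = (\<lambda>\<omega>. ennreal (norm_inf_2 n (copy_difference n \<omega>)))"
  have F: "F \<in> borel_measurable (PiM (I \<union> J) (\<lambda>_. \<mu>))"
    unfolding F_def IJ(1) by (rule borel_measurable_norm_inf_2_copy_difference[OF \<mu>(2)])
  have inner: "ennreal (norm_inf_2 n (\<lambda>k. A k - integral\<^sup>L \<mu> (\<lambda>x. x)))
      \<le> (\<integral>\<^sup>+A'. F (merge I J (A, A')) \<partial>PiM J (\<lambda>_. \<mu>))" for A
  proof -
    have "ennreal (norm_inf_2 n (\<lambda>k. A k - integral\<^sup>L \<mu> (\<lambda>x. x)))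
        \<le> (\<integral>\<^sup>+A'. ennreal (norm_inf_2 n (\<lambda>k. A k - A' (shift_rows n k))) \<partial>PiM J (\<lambda>_. \<mu>))"
      using shift \<mu>(1) int
      by (intro norm_inf_2_mean_le prob_space_PiM integrable_PiM_component integral_PiM_component) auto
    also have "\<dots> = (\<integral>\<^sup>+A'. F (merge I J (A, A')) \<partial>PiM J (\<lambda>_. \<mu>))"
      unfolding F_def copy_difference_def using shift IJ(2)
      by (intro nn_integral_cong arg_cong[where f = ennreal] norm_inf_2_cong)
         (auto simp: I_def merge_def shift_rows_def)
    finally show ?thesis .
  qed
  have "(\<integral>\<^sup>+A. ennreal (norm_inf_2 n (\<lambda>k. A k - integral\<^sup>L \<mu> (\<lambda>x. x))) \<partial>PiM I (\<lambda>_. \<mu>))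
      \<le> (\<integral>\<^sup>+A. (\<integral>\<^sup>+A'. F (merge I J (A, A')) \<partial>PiM J (\<lambda>_. \<mu>)) \<partial>PiM I (\<lambda>_. \<mu>))"
    by (intro nn_integral_mono inner)
  also have "\<dots> = (\<integral>\<^sup>+\<omega>. F \<omega> \<partial>PiM (I \<union> J) (\<lambda>_. \<mu>))"
    using IJ(2) by (intro product_nn_integral_fold[symmetric] F) (auto simp: I_def J_def)
  finally show ?thesis
    unfolding F_def IJ(1) unfolding I_def .
qed

text \<open>\<open>A - A'\<close> is symmetric: exchanging \<open>A\<^sub>i\<^sub>j\<close> with \<open>A'\<^sub>i\<^sub>j\<close> wherever \<open>\<epsilon>\<^sub>i\<^sub>j = -1\<close> preserves the
  product measure and turns \<open>A - A'\<close> into \<open>flip_signs \<epsilon> (A - A')\<close>.\<close>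

lemma nn_integral_norm_inf_2_flip_signs_copy_difference:
  fixes \<mu> :: "real measure"
  assumes \<mu>: "prob_space \<mu>" "sets \<mu> = sets borel" and \<epsilon>: "\<epsilon> \<in> sign_matrices n"
  shows "(\<integral>\<^sup>+\<omega>. ennreal (norm_inf_2 n (flip_signs \<epsilon> (copy_difference n \<omega>))) \<partial>iid_stacked_pair n \<mu>)
       = (\<integral>\<^sup>+\<omega>. ennreal (norm_inf_2 n (copy_difference n \<omega>)) \<partial>iid_stacked_pair n \<mu>)"
proof -
  define K where "K = {..<2 * n} \<times> {..<(n::nat)}"
  have "norm_inf_2 n (copy_difference n (\<lambda>k\<in>K. \<omega> (swap_copies n \<epsilon> k)))
      = norm_inf_2 n (flip_signs \<epsilon> (copy_difference n \<omega>))" for \<omega>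
  proof (rule norm_inf_2_cong)
    fix i j assume ij: "i < n" "j < n"
    then have "\<epsilon> i j = -1 \<or> \<epsilon> i j = 1"
      using \<epsilon> by (auto simp: PiE_iff)
    then show "copy_difference n (\<lambda>k\<in>K. \<omega> (swap_copies n \<epsilon> k)) (i, j)
        = flip_signs \<epsilon> (copy_difference n \<omega>) (i, j)"
      using ij by (auto simp: K_def copy_difference_def shift_rows_def swap_copies_def flip_signs_def)
  qed
  then show ?thesis
    using nn_integral_PiM_reindex[OF \<mu>(1) inj_on_swap_copies[of n \<epsilon>] swap_copies_in[of n \<epsilon>]
        borel_measurable_norm_inf_2_copy_difference[OF \<mu>(2), of n]]
    unfolding K_def by simp
qed

lemma nn_integral_norm_2_inf_copy:
  fixes \<mu> :: "real measure"
  assumes \<mu>: "prob_space \<mu>" "sets \<mu> = sets borel"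
    and f: "inj_on f ({..<n} \<times> {..<n})" "f \<in> {..<n} \<times> {..<n} \<rightarrow> {..<2 * n} \<times> {..<n}"
  shows "(\<integral>\<^sup>+\<omega>. ennreal (norm_2_inf n (\<lambda>k. \<omega> (f k))) \<partial>iid_stacked_pair n \<mu>)
       = (\<integral>\<^sup>+A. ennreal (norm_2_inf n A) \<partial>PiM ({..<n} \<times> {..<n}) (\<lambda>_. \<mu>))"
proof -
  have "norm_2_inf n (\<lambda>k. \<omega> (f k)) = norm_2_inf n (\<lambda>k\<in>{..<n} \<times> {..<n}. \<omega> (f k))" for \<omega>
    by (rule norm_2_inf_cong) simp
  moreover have "(\<lambda>A. ennreal (norm_2_inf n A)) \<in> borel_measurable (PiM ({..<n} \<times> {..<n}) (\<lambda>_. \<mu>))"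
    using \<mu>(2)
    by (intro measurable_compose[OF _ measurable_ennreal] borel_measurable_norm_2_inf
        borel_measurable_PiM_component) auto
  ultimately show ?thesis
    using nn_integral_PiM_reindex[OF \<mu>(1) f] by simp
qed

lemma nn_integral_norm_2_inf_copies:
  fixes \<mu> :: "real measure"
  assumes \<mu>: "prob_space \<mu>" "sets \<mu> = sets borel"
  shows "(\<integral>\<^sup>+\<omega>. ennreal (norm_2_inf n \<omega>) + ennreal (norm_2_inf n (\<lambda>k. \<omega> (shift_rows n k))) \<partial>iid_stacked_pair n \<mu>)
       = 2 * (\<integral>\<^sup>+A. ennreal (norm_2_inf n A) \<partial>PiM ({..<n} \<times> {..<n}) (\<lambda>_. \<mu>))"
proof -
  have "(\<lambda>k. k) \<in> {..<n} \<times> {..<n} \<rightarrow> {..<2 * n} \<times> {..<n}"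
    by auto
  note copy = nn_integral_norm_2_inf_copy[OF \<mu> inj_on_id2 this]
  have "shift_rows n \<in> {..<n} \<times> {..<n} \<rightarrow> {..<2 * n} \<times> {..<n}"
    by (auto simp: shift_rows_def)
  note shifted_copy = nn_integral_norm_2_inf_copy[OF \<mu> inj_on_shift_rows this]
  have "(\<integral>\<^sup>+\<omega>. ennreal (norm_2_inf n \<omega>) + ennreal (norm_2_inf n (\<lambda>k. \<omega> (shift_rows n k))) \<partial>iid_stacked_pair n \<mu>)
      = (\<integral>\<^sup>+\<omega>. ennreal (norm_2_inf n \<omega>) \<partial>iid_stacked_pair n \<mu>)
        + (\<integral>\<^sup>+\<omega>. ennreal (norm_2_inf n (\<lambda>k. \<omega> (shift_rows n k))) \<partial>iid_stacked_pair n \<mu>)"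
    using \<mu>(2)
    by (intro nn_integral_add measurable_compose[OF _ measurable_ennreal] borel_measurable_norm_2_inf
        borel_measurable_PiM_component) (auto simp: shift_rows_def)
  then show ?thesis
    unfolding copy shifted_copy by (simp only: mult_2)
qed

lemma nn_integral_sum_flip_signs_copy_difference:
  fixes \<mu> :: "real measure"
  assumes \<mu>: "prob_space \<mu>" "sets \<mu> = sets borel"
  shows "(\<integral>\<^sup>+\<omega>. (\<Sum>\<epsilon>\<in>sign_matrices n. ennreal (norm_inf_2 n (flip_signs \<epsilon> (copy_difference n \<omega>))))
            \<partial>iid_stacked_pair n \<mu>)
       = of_nat (card (sign_matrices n)) * (\<integral>\<^sup>+\<omega>. ennreal (norm_inf_2 n (copy_difference n \<omega>)) \<partial>iid_stacked_pair n \<mu>)"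
proof -
  have "(\<integral>\<^sup>+\<omega>. (\<Sum>\<epsilon>\<in>sign_matrices n. ennreal (norm_inf_2 n (flip_signs \<epsilon> (copy_difference n \<omega>))))
            \<partial>iid_stacked_pair n \<mu>)
      = (\<Sum>\<epsilon>\<in>sign_matrices n. \<integral>\<^sup>+\<omega>. ennreal (norm_inf_2 n (flip_signs \<epsilon> (copy_difference n \<omega>)))
            \<partial>iid_stacked_pair n \<mu>)"
    using \<mu>(2)
    by (intro nn_integral_sum measurable_compose[OF _ measurable_ennreal] borel_measurable_norm_inf_2)
       (auto simp: flip_signs_def intro!: borel_measurable_times borel_measurable_copy_difference)
  then show ?thesis
    using nn_integral_norm_inf_2_flip_signs_copy_difference[OF \<mu>] by simp
qed

lemma nn_integral_norm_inf_2_copy_difference_le: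
  fixes \<mu> :: "real measure"
  assumes \<mu>: "prob_space \<mu>" "sets \<mu> = sets borel"
  shows "(\<integral>\<^sup>+\<omega>. ennreal (norm_inf_2 n (copy_difference n \<omega>)) \<partial>iid_stacked_pair n \<mu>)
      \<le> ennreal (8 * sqrt (real n)) * (\<integral>\<^sup>+A. ennreal (norm_2_inf n A) \<partial>PiM ({..<n} \<times> {..<n}) (\<lambda>_. \<mu>))"
proof -
  define N where "N = card (sign_matrices n)"
  define c where "c = 4 * sqrt (real n)"
  define G where "G = (\<lambda>\<omega>. ennreal (norm_2_inf n \<omega>) + ennreal (norm_2_inf n (\<lambda>k. \<omega> (shift_rows n k))))"
  have N: "0 < N"
    unfolding N_def using finite_sign_matrices by (simp add: card_gt_0_iff PiE_eq_empty_iff)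
  have c: "ennreal (8 * sqrt (real n)) = 2 * ennreal c"
    unfolding c_def using ennreal_mult[of 2 "4 * sqrt (real n)"] by simp
  have "(\<Sum>\<epsilon>\<in>sign_matrices n. ennreal (norm_inf_2 n (flip_signs \<epsilon> (copy_difference n \<omega>))))
      \<le> of_nat N * (ennreal c * G \<omega>)" for \<omega>
  proof -
    have difference: "copy_difference n \<omega> = (\<lambda>k. \<omega> k - \<omega> (shift_rows n k))"
      by (rule ext) (simp add: copy_difference_def)
    have "ennreal (\<Sum>\<epsilon>\<in>sign_matrices n. norm_inf_2 n (flip_signs \<epsilon> (copy_difference n \<omega>)))
        \<le> ennreal (real N * (c * (norm_2_inf n \<omega> + norm_2_inf n (\<lambda>k. \<omega> (shift_rows n k)))))"
      unfolding difference N_def c_def by (intro ennreal_leI sum_norm_inf_2_flip_signs_diff_le)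
    then show ?thesis
      unfolding G_def c_def
      by (simp add: sum_ennreal norm_inf_2_nonneg norm_2_inf_nonneg ennreal_mult ennreal_of_nat_eq_real_of_nat
          flip: ennreal_plus)
  qed
  then have "of_nat N * (\<integral>\<^sup>+\<omega>. ennreal (norm_inf_2 n (copy_difference n \<omega>)) \<partial>iid_stacked_pair n \<mu>)
      \<le> (\<integral>\<^sup>+\<omega>. of_nat N * (ennreal c * G \<omega>) \<partial>iid_stacked_pair n \<mu>)"
    unfolding N_def nn_integral_sum_flip_signs_copy_difference[OF \<mu>, symmetric] by (rule nn_integral_mono)
  also have "\<dots> = of_nat N * (ennreal (8 * sqrt (real n)) * (\<integral>\<^sup>+A. ennreal (norm_2_inf n A) \<partial>PiM ({..<n} \<times> {..<n}) (\<lambda>_. \<mu>)))"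
  proof -
    have "G \<in> borel_measurable (iid_stacked_pair n \<mu>)"
      unfolding G_def using \<mu>(2)
      by (intro borel_measurable_add measurable_compose[OF _ measurable_ennreal] borel_measurable_norm_2_inf
          borel_measurable_PiM_component) (auto simp: shift_rows_def)
    then show ?thesis
      unfolding c using nn_integral_norm_2_inf_copies[OF \<mu>, of n]
      by (simp add: nn_integral_cmult G_def mult_ac)
  qed
  finally show ?thesis
    using N by (subst (asm) ennreal_mult_le_mult_iff) auto
qed

lemma abs_mean_le_nn_integral_row_sums:
  fixes \<mu> :: "real measure"
  assumes \<mu>: "prob_space \<mu>" and int: "integrable \<mu> (\<lambda>x. x)"
  shows "ennreal (real n * sqrt (real n) * \<bar>integral\<^sup>L \<mu> (\<lambda>x. x)\<bar>)
           \<le> (\<integral>\<^sup>+A. ennreal (euclid_norm n (mat_vec n A (\<lambda>_. 1))) \<partial>PiM ({..<n} \<times> {..<n}) (\<lambda>_. \<mu>))"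
proof -
  define m where "m = integral\<^sup>L \<mu> (\<lambda>x. x)"
  have neg: "mat_vec n (\<lambda>k. 0 - A k) (\<lambda>_. 1) = (\<lambda>i. - mat_vec n A (\<lambda>_. 1) i)" for A
    unfolding mat_vec_def by (simp add: sum_negf)
  have "euclid_norm n (mat_vec n (\<lambda>k. 0 - m) (\<lambda>_. 1)) = euclid_norm n (\<lambda>_. - (real n * m))"
    unfolding mat_vec_def by simp
  also have "\<dots> = real n * sqrt (real n) * \<bar>m\<bar>"
    unfolding euclid_norm_eq_L2_set L2_set_constant by (simp add: abs_mult)
  finally have centered: "euclid_norm n (mat_vec n (\<lambda>k. 0 - m) (\<lambda>_. 1)) = real n * sqrt (real n) * \<bar>m\<bar>" .
  have "ennreal (euclid_norm n (mat_vec n (\<lambda>k. 0 - m) (\<lambda>_. 1)))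
      \<le> (\<integral>\<^sup>+A. ennreal (euclid_norm n (mat_vec n (\<lambda>k. 0 - A k) (\<lambda>_. 1))) \<partial>PiM ({..<n} \<times> {..<n}) (\<lambda>_. \<mu>))"
    unfolding m_def using \<mu> int
    by (intro euclid_norm_mat_vec_mean_le prob_space_PiM integrable_PiM_component integral_PiM_component) auto
  then have "ennreal (real n * sqrt (real n) * \<bar>m\<bar>)
      \<le> (\<integral>\<^sup>+A. ennreal (euclid_norm n (mat_vec n (\<lambda>k. 0 - A k) (\<lambda>_. 1))) \<partial>PiM ({..<n} \<times> {..<n}) (\<lambda>_. \<mu>))"
    unfolding centered .
  also have "\<dots> = (\<integral>\<^sup>+A. ennreal (euclid_norm n (mat_vec n A (\<lambda>_. 1))) \<partial>PiM ({..<n} \<times> {..<n}) (\<lambda>_. \<mu>))"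
    unfolding neg euclid_norm_def by simp
  finally show ?thesis
    unfolding m_def .
qed

lemma nn_integral_norm_2_inf_eq_top:
  fixes \<mu> :: "real measure"
  assumes \<mu>: "prob_space \<mu>" "sets \<mu> = sets borel" and "0 < n" "\<not> integrable \<mu> (\<lambda>x. x)"
  shows "(\<integral>\<^sup>+A. ennreal (norm_2_inf n A) \<partial>PiM ({..<n} \<times> {..<n}) (\<lambda>_. \<mu>)) = \<infinity>"
proof -
  have measurable: "(\<lambda>x. x) \<in> borel_measurable \<mu>"
    by (rule measurable_ident_sets[OF \<mu>(2)])
  then have infinite: "(\<integral>\<^sup>+x. ennreal \<bar>x\<bar> \<partial>\<mu>) = \<infinity>"
    using assms(4) by (simp add: integrable_iff_bounded less_top[symmetric])
  have "(\<integral>\<^sup>+x. ennreal \<bar>x\<bar> \<partial>\<mu>) = (\<integral>\<^sup>+A. ennreal \<bar>A (0, 0)\<bar> \<partial>PiM ({..<n} \<times> {..<n}) (\<lambda>_. \<mu>))"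
    using assms(3) measurable by (intro nn_integral_PiM_component[symmetric] \<mu>(1)) auto
  also have "\<dots> \<le> (\<integral>\<^sup>+A. ennreal (norm_2_inf n A) \<partial>PiM ({..<n} \<times> {..<n}) (\<lambda>_. \<mu>))"
    using assms(3) by (intro nn_integral_mono ennreal_leI abs_entry_le_norm_2_inf)
  finally show ?thesis
    unfolding infinite by (simp add: top_unique)
qed

lemma nn_integral_norm_inf_2_le:
  fixes \<mu> :: "real measure"
  assumes \<mu>: "prob_space \<mu>" "sets \<mu> = sets borel"
  shows "(\<integral>\<^sup>+A. ennreal (norm_inf_2 n A) \<partial>iid_matrix n \<mu>)
      \<le> ennreal (8 * sqrt (real n)) * (\<integral>\<^sup>+A. ennreal (norm_2_inf n A) \<partial>iid_matrix n \<mu>)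
        + (\<integral>\<^sup>+A. ennreal (euclid_norm n (mat_vec n A (\<lambda>_. 1))) \<partial>iid_matrix n \<mu>)"
proof (cases "integrable \<mu> (\<lambda>x. x)")
  case True
  define m where "m = integral\<^sup>L \<mu> (\<lambda>x. x)"
  define P where "P = PiM ({..<n} \<times> {..<n}) (\<lambda>_::nat \<times> nat. \<mu>)"
  interpret prob_space P
    unfolding P_def by (rule prob_space_PiM) (use \<mu> in auto)
  have "(\<lambda>A. ennreal (norm_inf_2 n (\<lambda>k. A k - m))) \<in> borel_measurable P"
    unfolding P_def using \<mu>(2)
    by (intro measurable_compose[OF _ measurable_ennreal] borel_measurable_norm_inf_2
        borel_measurable_diff borel_measurable_PiM_component borel_measurable_const) auto
  moreover have "(\<integral>\<^sup>+A. ennreal (norm_inf_2 n A) \<partial>P)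
      \<le> (\<integral>\<^sup>+A. ennreal (norm_inf_2 n (\<lambda>k. A k - m)) + ennreal (real n * sqrt (real n) * \<bar>m\<bar>) \<partial>P)"
    using norm_inf_2_le_centered[of n _ m]
    by (intro nn_integral_mono) (simp add: norm_inf_2_nonneg flip: ennreal_plus)
  ultimately have "(\<integral>\<^sup>+A. ennreal (norm_inf_2 n A) \<partial>P)
      \<le> (\<integral>\<^sup>+A. ennreal (norm_inf_2 n (\<lambda>k. A k - m)) \<partial>P) + ennreal (real n * sqrt (real n) * \<bar>m\<bar>)"
    by (simp add: nn_integral_add emeasure_space_1)
  also have "\<dots> \<le> ennreal (8 * sqrt (real n)) * (\<integral>\<^sup>+A. ennreal (norm_2_inf n A) \<partial>P)
      + (\<integral>\<^sup>+A. ennreal (euclid_norm n (mat_vec n A (\<lambda>_. 1))) \<partial>P)"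
    unfolding P_def m_def
    using nn_integral_norm_inf_2_centered_le[OF \<mu> True, of n] nn_integral_norm_inf_2_copy_difference_le[OF \<mu>, of n]
      abs_mean_le_nn_integral_row_sums[OF \<mu>(1) True, of n]
    by (intro add_mono) auto
  finally show ?thesis
    unfolding iid_matrix_def P_def .
next
  case not_integrable: False
  show ?thesis
  proof (cases "n = 0")
    case False
    with not_integrable show ?thesis
      unfolding iid_matrix_def using nn_integral_norm_2_inf_eq_top[OF \<mu>] by (simp add: ennreal_mult_top)
  qed simp
qed

theorem mainTheorem8:
  shows "\<exists>C::real. C > 0 \<and>
    (\<forall>(n::nat) (\<mu>::real measure). prob_space \<mu> \<longrightarrow> sets \<mu> = sets borel \<longrightarrow>
      (\<integral>\<^sup>+ A. ennreal (norm_inf_2 n A) \<partial>iid_matrix n \<mu>)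
        \<le> ennreal (C * sqrt (real n)) * (\<integral>\<^sup>+ A. ennreal (norm_2_inf n A) \<partial>iid_matrix n \<mu>)
          + ennreal C * (\<integral>\<^sup>+ A. ennreal (euclid_norm n (mat_vec n A (\<lambda>_. 1))) \<partial>iid_matrix n \<mu>))"
proof (intro exI[of _ 8] conjI allI impI)
  fix n :: nat and \<mu> :: "real measure"
  assume "prob_space \<mu>" "sets \<mu> = sets borel"
  have "(\<integral>\<^sup>+ A. ennreal (euclid_norm n (mat_vec n A (\<lambda>_. 1))) \<partial>iid_matrix n \<mu>)
      \<le> ennreal 8 * (\<integral>\<^sup>+ A. ennreal (euclid_norm n (mat_vec n A (\<lambda>_. 1))) \<partial>iid_matrix n \<mu>)"
    using mult_right_mono[of "1::ennreal" 8] by simp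
  then show "(\<integral>\<^sup>+ A. ennreal (norm_inf_2 n A) \<partial>iid_matrix n \<mu>)
      \<le> ennreal (8 * sqrt (real n)) * (\<integral>\<^sup>+ A. ennreal (norm_2_inf n A) \<partial>iid_matrix n \<mu>)
        + ennreal 8 * (\<integral>\<^sup>+ A. ennreal (euclid_norm n (mat_vec n A (\<lambda>_. 1))) \<partial>iid_matrix n \<mu>)"
    using nn_integral_norm_inf_2_le[OF \<open>prob_space \<mu>\<close> \<open>sets \<mu> = sets borel\<close>, of n]
    by (meson add_left_mono order_trans)
qed simp

end
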